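(* Let $\mathcal{X}$ be a finite nonempty set of types, $n=(n_x)_{x\in\mathcal{X}}$ nonnegative integers, and $\Phi=(\Phi_{xy})_{x,y\in\mathcal{X}}$ a real matrix with $\Phi_{xy}=\Phi_{yx}$. Then $\mathcal{W}_{\mathcal{F}}(n,\Phi)=\mathcal{W}_{\mathcal{B}}(n,n,\Phi/2)$. Moreover, the maximization problem defining $\mathcal{W}_{\mathcal{F}}(n,\Phi)$ has a half-integral optimal solution (all entries in $\frac12\mathbb{N}$).
   Context: Fractional roommate matchings: $\mathcal{F}(n)=\{\mu=(\mu_{xy})_{x,y\in\mathcal{X}}:\ \mu_{xy}\ge0\text{ real},\ \mu_{xy}=\mu_{yx},\ 2\mu_{xx}+\sum_{y\ne x}\mu_{xy}\le n_x\ \forall x\}$, and $\mathcal{W}_{\mathcal{F}}(n,\Phi)=\max_{\mu\in\mathcal{F}(n)}\bigl(\sum_x\mu_{xx}\Phi_{xx}+\sum_{x\ne y}\mu_{xy}\Phi_{xy}/2\bigr)$. Bipartite problem: $\mathcal{B}(n,n)=\{\nu\in\mathbb{N}^{\mathcal{X}\times\mathcal{X}}:\ \sum_y\nu_{xy}\le n_x\ \forall x,\ \sum_x\nu_{xy}\le n_y\ \forall y\}$ and $\mathcal{W}_{\mathcal{B}}(n,n,\Phi/2)=\max_{\nu\in\mathcal{B}(n,n)}\sum_{x,y}\nu_{xy}\Phi_{xy}/2$. *)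

theory Defs
  imports Complex_Main
begin

definition frac_match :: "('x::finite \<Rightarrow> nat) \<Rightarrow> ('x \<Rightarrow> 'x \<Rightarrow> real) set" where
  "frac_match n = {\<mu>. (\<forall>x y. \<mu> x y \<ge> 0) \<and> (\<forall>x y. \<mu> x y = \<mu> y x) \<and>
      (\<forall>x. 2 * \<mu> x x + (\<Sum>y\<in>UNIV - {x}. \<mu> x y) \<le> real (n x))}"

definition frac_obj :: "('x::finite \<Rightarrow> 'x \<Rightarrow> real) \<Rightarrow> ('x \<Rightarrow> 'x \<Rightarrow> real) \<Rightarrow> real" where
  "frac_obj \<Phi> \<mu> = (\<Sum>x\<in>UNIV. \<mu> x x * \<Phi> x x)
      + (\<Sum>p\<in>{(x,y). x \<noteq> y}. \<mu> (fst p) (snd p) * \<Phi> (fst p) (snd p) / 2)"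

definition W_F :: "('x::finite \<Rightarrow> nat) \<Rightarrow> ('x \<Rightarrow> 'x \<Rightarrow> real) \<Rightarrow> real" where
  "W_F n \<Phi> = Sup (frac_obj \<Phi> ` frac_match n)"

definition bip_match :: "('x::finite \<Rightarrow> nat) \<Rightarrow> ('x \<Rightarrow> nat) \<Rightarrow> ('x \<Rightarrow> 'x \<Rightarrow> nat) set" where
  "bip_match n m = {\<nu>. (\<forall>x. (\<Sum>y\<in>UNIV. \<nu> x y) \<le> n x) \<and> (\<forall>y. (\<Sum>x\<in>UNIV. \<nu> x y) \<le> m y)}"

definition W_B :: "('x::finite \<Rightarrow> nat) \<Rightarrow> ('x \<Rightarrow> nat) \<Rightarrow> ('x \<Rightarrow> 'x \<Rightarrow> real) \<Rightarrow> real" where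
  "W_B n m \<Psi> = Max ((\<lambda>\<nu>. \<Sum>p\<in>UNIV. real (\<nu> (fst p) (snd p)) * \<Psi> (fst p) (snd p)) ` bip_match n m)"

definition half_integral :: "('x \<Rightarrow> 'x \<Rightarrow> real) \<Rightarrow> bool" where
  "half_integral \<mu> = (\<forall>x y. \<exists>k::nat. \<mu> x y = real k / 2)"

end

theory Submission
  imports Defs "HOL-Library.FuncSet"
begin

text \<open>Doubling the diagonal of a fractional roommate matching \<open>\<mu>\<close> gives a symmetric fractional
  bipartite matching with capacities \<open>n\<close> on both sides whose value for the weights \<open>\<Phi>/2\<close> is that
  of \<open>\<mu>\<close>. Conversely, an integral bipartite matching \<open>\<nu>\<close> yields the half-integral roommate matching
  \<open>(\<nu> + \<nu>\<^sup>T)/2\<close> with halved diagonal, of the same value because \<open>\<Phi>\<close> is symmetric.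
  So everything reduces to the integrality of the fractional bipartite problem. A line with integral
  sum meets the fractional entries of a feasible plan at least twice or not at all, a line with
  fractional sum meets them at least once, and every entry lies on two lines; hence the integral line
  sums impose fewer independent linear conditions on the fractional entries than there are such
  entries, and some nonzero direction changes only fractional entries while fixing every integral
  line sum; moving along it, in the sense that does not decrease the objective, until some further entry
  or line sum becomes integral keeps the plan feasible, and induction on the number of fractional
  entries and line sums ends with an integral plan.\<close>

lemma underdetermined_homogeneous_system_nonzero_solution:
  fixes a :: "'j \<Rightarrow> 'e \<Rightarrow> real"
  assumes "finite J" "finite E" "card J < card E"
  obtains d where "\<And>e. e \<notin> E \<Longrightarrow> d e = 0" "\<exists>e\<in>E. d e \<noteq> 0"
    "\<And>j. j \<in> J \<Longrightarrow> (\<Sum>e\<in>E. a j e * d e) = 0"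
  using assms
proof (induction J arbitrary: E a thesis rule: finite_induct)
  case empty
  then obtain e0 where "e0 \<in> E"
    by fastforce
  then show ?case
    by (intro empty.prems(1)[of "\<lambda>e. if e = e0 then 1 else 0"]) auto
next
  case (insert j J)
  show ?case
  proof (cases "\<forall>e\<in>E. a j e = 0")
    case True
    have "card J < card E"
      using insert by simp
    with insert.IH[of E a] insert.prems(2) obtain d where d: "\<And>e. e \<notin> E \<Longrightarrow> d e = 0" "\<exists>e\<in>E. d e \<noteq> 0"
      "\<And>j. j \<in> J \<Longrightarrow> (\<Sum>e\<in>E. a j e * d e) = 0"
      by blast
    show ?thesis
      using True d by (intro insert.prems(1)[of d]) auto
  next
    case False
    then obtain e0 where e0: "e0 \<in> E" "a j e0 \<noteq> 0"
      by blast
    \<comment> \<open>Gaussian elimination: use equation j to eliminate the unknown e0 from the others.\<close>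
    define E' where "E' = E - {e0}"
    define a' where "a' = (\<lambda>j' e. a j' e - a j' e0 * a j e / a j e0)"
    obtain d' where d': "\<And>e. e \<notin> E' \<Longrightarrow> d' e = 0" "\<exists>e\<in>E'. d' e \<noteq> 0"
      "\<And>j'. j' \<in> J \<Longrightarrow> (\<Sum>e\<in>E'. a' j' e * d' e) = 0"
    proof (rule insert.IH[of _ a'])
      show "finite E'" "card J < card E'"
        using insert e0 unfolding E'_def by auto
    qed blast
    define S where "S = (\<Sum>e\<in>E'. a j e * d' e)"
    define d where "d = d'(e0 := - S / a j e0)"
    have split: "(\<Sum>e\<in>E. b e * d e) = b e0 * d e0 + (\<Sum>e\<in>E'. b e * d' e)" for b
      using e0 insert.prems unfolding d_def E'_def by (simp add: sum.remove)
    have "(\<Sum>e\<in>E. a j' e * d e) = 0" if "j' \<in> J" for j'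
    proof -
      have "0 = (\<Sum>e\<in>E'. a' j' e * d' e)"
        using d' that by simp
      also have "\<dots> = (\<Sum>e\<in>E'. a j' e * d' e) - a j' e0 / a j e0 * S"
        unfolding a'_def S_def
        by (simp add: algebra_simps sum_subtractf sum_distrib_left sum_divide_distrib)
      finally show ?thesis
        unfolding split using e0 by (simp add: d_def)
    qed
    moreover have "(\<Sum>e\<in>E. a j e * d e) = 0"
      unfolding split using e0 by (simp add: d_def S_def)
    ultimately show ?thesis
      using d' e0 by (intro insert.prems(1)[of d]) (auto simp: d_def E'_def)
  qed
qed

definition exit_time :: "real \<Rightarrow> real \<Rightarrow> real" where
  "exit_time x \<delta> = ((if \<delta> > 0 then of_int \<lceil>x\<rceil> else of_int \<lfloor>x\<rfloor>) - x) / \<delta>"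

lemma exit_time_pos: "x \<notin> \<int> \<Longrightarrow> \<delta> \<noteq> 0 \<Longrightarrow> 0 < exit_time x \<delta>"
proof -
  assume "x \<notin> \<int>" "\<delta> \<noteq> 0"
  then have "of_int \<lfloor>x\<rfloor> \<noteq> x" "of_int \<lceil>x\<rceil> \<noteq> x"
    by (metis Ints_of_int)+
  then have "of_int \<lfloor>x\<rfloor> < x" "x < of_int \<lceil>x\<rceil>"
    using of_int_floor_le[of x] le_of_int_ceiling[of x] by linarith+
  with \<open>\<delta> \<noteq> 0\<close> show ?thesis
    unfolding exit_time_def by (auto simp: divide_pos_pos divide_neg_neg)
qed

lemma exit_time_in_Ints: "\<delta> \<noteq> 0 \<Longrightarrow> x + exit_time x \<delta> * \<delta> \<in> \<int>"
  unfolding exit_time_def by auto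

lemma exit_time_floor_ceiling:
  assumes "0 \<le> t" "t \<le> exit_time x \<delta>"
  shows "of_int \<lfloor>x\<rfloor> \<le> x + t * \<delta> \<and> x + t * \<delta> \<le> of_int \<lceil>x\<rceil>"
proof (cases "\<delta> > 0")
  case True
  then have "t * \<delta> \<le> of_int \<lceil>x\<rceil> - x"
    using assms by (simp add: exit_time_def pos_le_divide_eq)
  with True assms show ?thesis
    using mult_nonneg_nonneg[of t \<delta>] of_int_floor_le[of x] by linarith
next
  case False
  show ?thesis
  proof (cases "\<delta> = 0")
    case False
    with \<open>\<not> \<delta> > 0\<close> have "of_int \<lfloor>x\<rfloor> - x \<le> t * \<delta>"
      using assms by (simp add: exit_time_def neg_le_divide_eq)
    with \<open>\<not> \<delta> > 0\<close> assms show ?thesis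
      using mult_nonneg_nonpos[of t \<delta>] le_of_int_ceiling[of x] by linarith
  qed auto
qed

lemma step_to_fewer_fractional:
  fixes x \<delta> :: "'i::finite \<Rightarrow> real"
  assumes fixed: "\<And>i. x i \<in> \<int> \<Longrightarrow> \<delta> i = 0" and moving: "\<delta> i0 \<noteq> 0"
  obtains t where "0 < t"
    "\<forall>i. of_int \<lfloor>x i\<rfloor> \<le> x i + t * \<delta> i \<and> x i + t * \<delta> i \<le> of_int \<lceil>x i\<rceil>"
    "{i. x i + t * \<delta> i \<notin> \<int>} \<subset> {i. x i \<notin> \<int>}"
proof -
  define T where "T = (\<lambda>i. exit_time (x i) (\<delta> i)) ` {i. \<delta> i \<noteq> 0}"
  define t where "t = Min T"
  have "finite T" "T \<noteq> {}"
    using moving by (auto simp: T_def)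
  then have "t \<in> T"
    unfolding t_def by (rule Min_in)
  then obtain i1 where i1: "\<delta> i1 \<noteq> 0" "t = exit_time (x i1) (\<delta> i1)"
    unfolding T_def by blast
  have t_le: "t \<le> exit_time (x i) (\<delta> i)" if "\<delta> i \<noteq> 0" for i
    using \<open>finite T\<close> that unfolding t_def T_def by simp
  have "0 < t"
    using i1 fixed exit_time_pos by blast
  moreover have "of_int \<lfloor>x i\<rfloor> \<le> x i + t * \<delta> i \<and> x i + t * \<delta> i \<le> of_int \<lceil>x i\<rceil>" for i
  proof (cases "\<delta> i = 0")
    case False
    then show ?thesis
      using exit_time_floor_ceiling[of t] t_le \<open>0 < t\<close> by simp
  qed auto
  moreover have "{i. x i + t * \<delta> i \<notin> \<int>} \<subset> {i. x i \<notin> \<int>}"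
  proof -
    have "{i. x i + t * \<delta> i \<notin> \<int>} \<subseteq> {i. x i \<notin> \<int>}"
      using fixed by auto
    moreover have "x i1 + t * \<delta> i1 \<in> \<int>" "x i1 \<notin> \<int>"
      using i1 fixed exit_time_in_Ints by blast+
    ultimately show ?thesis
      by blast
  qed
  ultimately show thesis
    using that by blast
qed

fun on_line :: "'a + 'b \<Rightarrow> 'a \<times> 'b \<Rightarrow> bool" where
  "on_line (Inl a) e \<longleftrightarrow> fst e = a"
| "on_line (Inr b) e \<longleftrightarrow> snd e = b"

definition line_sum :: "('a \<times> 'b \<Rightarrow> real) \<Rightarrow> 'a + 'b \<Rightarrow> real" where
  "line_sum v l = (\<Sum>e | on_line l e. v e)"

lemma line_sum_Inl: "line_sum v (Inl a) = (\<Sum>b\<in>UNIV. v (a, b :: 'b::finite))"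
proof -
  have row: "{e. on_line (Inl a) e} = Pair a ` (UNIV :: 'b set)"
    by auto
  show ?thesis
    unfolding line_sum_def row by (simp add: sum.reindex inj_on_def)
qed

lemma line_sum_Inr: "line_sum v (Inr b) = (\<Sum>a\<in>UNIV. v (a :: 'a::finite, b))"
proof -
  have column: "{e. on_line (Inr b) e} = (\<lambda>a. (a, b)) ` (UNIV :: 'a set)"
    by auto
  show ?thesis
    unfolding line_sum_def column by (simp add: sum.reindex inj_on_def)
qed

lemma line_sum_add_scaled: "line_sum (\<lambda>e. v e + t * d e) l = line_sum v l + t * line_sum d l"
  unfolding line_sum_def by (simp add: sum.distrib sum_distrib_left)

lemma line_sum_uminus: "line_sum (\<lambda>e. - d e) l = - line_sum d l"
  unfolding line_sum_def by (simp add: sum_negf)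

lemma line_sum_supported:
  fixes d :: "'a::finite \<times> 'b::finite \<Rightarrow> real"
  assumes "\<And>e. e \<notin> F \<Longrightarrow> d e = 0"
  shows "line_sum d l = (\<Sum>e\<in>F. (if on_line l e then 1 else 0) * d e)"
proof -
  have "line_sum d l = (\<Sum>e\<in>UNIV. (if on_line l e then 1 else 0) * d e)"
    unfolding line_sum_def by (simp add: if_distrib[of "\<lambda>c. c * _"] sum.If_cases)
  also have "\<dots> = (\<Sum>e\<in>F. (if on_line l e then 1 else 0) * d e)"
    using assms by (intro sum.mono_neutral_right) auto
  finally show ?thesis .
qed

text \<open>Row sums and column sums both add up to the total mass.\<close>
lemma line_sum_eq_0_if_others_eq_0:
  fixes d :: "'a::finite \<times> 'b::finite \<Rightarrow> real"
  assumes "\<And>l. l \<noteq> l0 \<Longrightarrow> line_sum d l = 0"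
  shows "line_sum d l0 = 0"
proof -
  have rows_cols: "(\<Sum>a\<in>UNIV. line_sum d (Inl a)) = (\<Sum>b\<in>UNIV. line_sum d (Inr b))"
    unfolding line_sum_Inl line_sum_Inr by (rule sum.swap)
  show ?thesis
  proof (cases l0)
    case (Inl a0)
    have "(\<Sum>a\<in>UNIV. line_sum d (Inl a)) = (\<Sum>a\<in>UNIV. if a = a0 then line_sum d l0 else 0)"
      using assms Inl by (intro sum.cong) auto
    with rows_cols assms Inl show ?thesis
      by simp
  next
    case (Inr b0)
    have "(\<Sum>b\<in>UNIV. line_sum d (Inr b)) = (\<Sum>b\<in>UNIV. if b = b0 then line_sum d l0 else 0)"
      using assms Inr by (intro sum.cong) auto
    with rows_cols assms Inr show ?thesis
      by simp
  qed
qed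

lemma sum_card_on_line:
  fixes F :: "('a::finite \<times> 'b::finite) set"
  shows "(\<Sum>l\<in>UNIV. card {e\<in>F. on_line l e}) = 2 * card F"
proof -
  have "(\<Sum>l\<in>UNIV. card {e\<in>F. on_line l e}) = (\<Sum>l\<in>UNIV. \<Sum>e\<in>F. if on_line l e then 1 else 0)"
    by (simp add: sum.inter_filter[symmetric])
  also have "\<dots> = (\<Sum>e\<in>F. \<Sum>l\<in>UNIV. if on_line l e then 1 else 0)"
    by (rule sum.swap)
  also have "\<dots> = (\<Sum>e\<in>F. 2)"
  proof (rule sum.cong)
    fix e :: "'a \<times> 'b"
    have "(\<Sum>l\<in>UNIV. if on_line l e then 1 else 0) = card {l. on_line l e}"
      by (simp add: sum.If_cases)
    also have "{l. on_line l e} = {Inl (fst e), Inr (snd e)}"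
      by (auto elim: on_line.elims)
    finally show "(\<Sum>l\<in>UNIV. if on_line l e then 1 else 0) = (2::nat)"
      by simp
  qed simp
  finally show ?thesis
    by simp
qed

lemma sum_notin_Ints_if_one_summand_notin_Ints:
  assumes "finite A" "{x\<in>A. f x \<notin> \<int>} = {x0}"
  shows "sum f A \<notin> \<int>"
proof
  assume "sum f A \<in> \<int>"
  have "x0 \<in> A" "f x0 \<notin> \<int>"
    using assms(2) by auto
  have "sum f (A - {x0}) \<in> \<int>"
    using assms(2) by (intro Ints_sum) auto
  moreover have "f x0 = sum f A - sum f (A - {x0})"
    using assms(1) \<open>x0 \<in> A\<close> by (simp add: sum.remove)
  ultimately show False
    using \<open>sum f A \<in> \<int>\<close> \<open>f x0 \<notin> \<int>\<close> Ints_diff by metis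
qed

text \<open>A line with integral sum carries either no fractional entry or at least two, and a line with
  fractional sum carries at least one; double counting the incidences gives the bound.\<close>
lemma card_lines_le_card_fractional_entries:
  fixes v :: "'a::finite \<times> 'b::finite \<Rightarrow> real"
  shows "2 * card {l. line_sum v l \<in> \<int> \<and> (\<exists>e. v e \<notin> \<int> \<and> on_line l e)} + card {l. line_sum v l \<notin> \<int>}
    \<le> 2 * card {e. v e \<notin> \<int>}"
proof -
  define F where "F = {e. v e \<notin> \<int>}"
  define J where "J = {l. line_sum v l \<in> \<int> \<and> (\<exists>e. v e \<notin> \<int> \<and> on_line l e)}"
  define N where "N = {l. line_sum v l \<notin> \<int>}"
  define deg where "deg l = card {e\<in>F. on_line l e}" for l
  have "J \<inter> N = {}"
    unfolding J_def N_def by auto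
  have deg_eq: "{e\<in>F. on_line l e} = {e\<in>{e. on_line l e}. v e \<notin> \<int>}" for l
    unfolding F_def by auto
  have "2 \<le> deg l" if "l \<in> J" for l
  proof -
    have "deg l \<noteq> 0"
      using that unfolding J_def deg_def F_def by auto
    moreover have "deg l \<noteq> 1"
    proof
      assume "deg l = 1"
      then obtain e1 where "{e\<in>{e. on_line l e}. v e \<notin> \<int>} = {e1}"
        unfolding deg_def deg_eq by (rule card_1_singletonE)
      then have "line_sum v l \<notin> \<int>"
        unfolding line_sum_def by (intro sum_notin_Ints_if_one_summand_notin_Ints) auto
      with that show False
        unfolding J_def by blast
    qed
    ultimately show ?thesis
      by linarith
  qed
  moreover have "1 \<le> deg l" if "l \<in> N" for l
  proof -
    have "\<exists>e. on_line l e \<and> v e \<notin> \<int>"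
      using that Ints_sum[of "{e. on_line l e}" v] unfolding N_def line_sum_def by blast
    then show ?thesis
      unfolding deg_def F_def by (auto simp: Suc_le_eq card_gt_0_iff)
  qed
  ultimately have "2 * card J + card N \<le> (\<Sum>l\<in>J. deg l) + (\<Sum>l\<in>N. deg l)"
    using sum_mono[of J "\<lambda>_. 2" deg] sum_mono[of N "\<lambda>_. 1" deg] by simp
  also have "\<dots> = (\<Sum>l\<in>J \<union> N. deg l)"
    using \<open>J \<inter> N = {}\<close> by (simp add: sum.union_disjoint)
  also have "\<dots> \<le> (\<Sum>l\<in>UNIV. deg l)"
    by (rule sum_mono2) auto
  also have "\<dots> = 2 * card F"
    unfolding deg_def by (rule sum_card_on_line)
  finally show ?thesis
    unfolding J_def N_def F_def .
qed

lemma exists_direction_balancing_lines: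
  fixes v :: "'a::finite \<times> 'b::finite \<Rightarrow> real" and L :: "('a + 'b) set"
  assumes "card L < card {e. v e \<notin> \<int>}"
  obtains d where "\<forall>e. v e \<in> \<int> \<longrightarrow> d e = 0" "\<exists>e. d e \<noteq> 0" "\<forall>l\<in>L. line_sum d l = 0"
proof -
  define F where "F = {e. v e \<notin> \<int>}"
  obtain d :: "'a \<times> 'b \<Rightarrow> real" where d: "\<And>e. e \<notin> F \<Longrightarrow> d e = 0" "\<exists>e\<in>F. d e \<noteq> 0"
    "\<And>l. l \<in> L \<Longrightarrow> (\<Sum>e\<in>F. (if on_line l e then 1 else 0) * d e) = 0"
    using underdetermined_homogeneous_system_nonzero_solution[OF finite finite assms[folded F_def],
        where a = "\<lambda>l e. if on_line l e then 1 else 0"] by blast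
  have "\<forall>l\<in>L. line_sum d l = 0"
    using d(3) by (simp add: line_sum_supported[OF d(1)])
  with d(1,2) show thesis
    using that[of d] unfolding F_def by blast
qed

lemma exists_direction_fixing_integral_line_sums:
  fixes v :: "'a::finite \<times> 'b::finite \<Rightarrow> real"
  assumes "v e0 \<notin> \<int>"
  obtains d where "\<forall>e. v e \<in> \<int> \<longrightarrow> d e = 0" "\<exists>e. d e \<noteq> 0"
    "\<forall>l. line_sum v l \<in> \<int> \<longrightarrow> line_sum d l = 0"
proof -
  define J where "J = {l. line_sum v l \<in> \<int> \<and> (\<exists>e. v e \<notin> \<int> \<and> on_line l e)}"
  define N where "N = {l. line_sum v l \<notin> \<int>}"
  have count: "2 * card J + card N \<le> 2 * card {e. v e \<notin> \<int>}"
    using card_lines_le_card_fractional_entries[of v] unfolding J_def N_def .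
  have outside_J: "line_sum d l = 0"
    if "\<forall>e. v e \<in> \<int> \<longrightarrow> d e = 0" "line_sum v l \<in> \<int>" "l \<notin> J" for d l
  proof -
    have "d e = 0" if "on_line l e" for e
      using that \<open>\<forall>e. v e \<in> \<int> \<longrightarrow> d e = 0\<close> \<open>line_sum v l \<in> \<int>\<close> \<open>l \<notin> J\<close> unfolding J_def by blast
    then show ?thesis
      unfolding line_sum_def by simp
  qed
  show thesis
  proof (cases "N = {}")
    case False
    then have "0 < card N"
      by (simp add: card_gt_0_iff)
    with count have "card J < card {e. v e \<notin> \<int>}"
      by linarith
    then obtain d where d: "\<forall>e. v e \<in> \<int> \<longrightarrow> d e = 0" "\<exists>e. d e \<noteq> 0" "\<forall>l\<in>J. line_sum d l = 0"
      by (rule exists_direction_balancing_lines)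
    then have "\<forall>l. line_sum v l \<in> \<int> \<longrightarrow> line_sum d l = 0"
      using outside_J by blast
    with d(1,2) show thesis
      using that by blast
  next
    case True
    \<comment> \<open>All line sums are integral; dropping one equation keeps the system underdetermined,
      and the dropped equation then holds automatically.\<close>
    define l0 :: "'a + 'b" where "l0 = Inl (fst e0)"
    have "l0 \<in> J"
      using assms True unfolding J_def N_def l0_def by (cases e0) auto
    then have "0 < card J"
      by (auto simp: card_gt_0_iff)
    with \<open>l0 \<in> J\<close> count have "card (J - {l0}) < card {e. v e \<notin> \<int>}"
      by simp
    then obtain d where d: "\<forall>e. v e \<in> \<int> \<longrightarrow> d e = 0" "\<exists>e. d e \<noteq> 0"
        "\<forall>l\<in>J - {l0}. line_sum d l = 0"
      by (rule exists_direction_balancing_lines)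
    have "line_sum d l = 0" if "l \<noteq> l0" for l
      using d(1,3) True that outside_J unfolding N_def by blast
    then have "line_sum d l = 0" for l
      using line_sum_eq_0_if_others_eq_0[of l0 d] by (cases "l = l0") auto
    with d(1,2) show thesis
      using that by blast
  qed
qed

definition transport_feasible :: "('a + 'b \<Rightarrow> nat) \<Rightarrow> ('a \<times> 'b \<Rightarrow> real) \<Rightarrow> bool" where
  "transport_feasible cap v \<longleftrightarrow> (\<forall>e. 0 \<le> v e) \<and> (\<forall>l. line_sum v l \<le> real (cap l))"

definition entries_and_line_sums :: "('a \<times> 'b \<Rightarrow> real) \<Rightarrow> ('a \<times> 'b) + ('a + 'b) \<Rightarrow> real" where
  "entries_and_line_sums v = case_sum v (line_sum v)"

lemma entries_and_line_sums_add_scaled: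
  "entries_and_line_sums (\<lambda>e. v e + t * d e) i = entries_and_line_sums v i + t * entries_and_line_sums d i"
  by (cases i) (simp_all add: entries_and_line_sums_def line_sum_add_scaled)

text \<open>The lower bound \<open>0\<close> and the capacities are integers, so rounding bounds preserve feasibility.\<close>
lemma transport_feasible_between_floor_ceiling:
  assumes "transport_feasible cap v"
    and "\<forall>i. of_int \<lfloor>entries_and_line_sums v i\<rfloor> \<le> entries_and_line_sums v' i
      \<and> entries_and_line_sums v' i \<le> of_int \<lceil>entries_and_line_sums v i\<rceil>"
  shows "transport_feasible cap v'"
  unfolding transport_feasible_def
proof (intro conjI allI)
  fix e
  have "0 \<le> v e"
    using assms(1) unfolding transport_feasible_def by blast
  then have "0 \<le> real_of_int \<lfloor>v e\<rfloor>"
    by simp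
  moreover have "of_int \<lfloor>v e\<rfloor> \<le> v' e"
    using assms(2)[rule_format, of "Inl e"] by (simp add: entries_and_line_sums_def)
  ultimately show "0 \<le> v' e"
    by linarith
next
  fix l
  have "line_sum v l \<le> real (cap l)"
    using assms(1) unfolding transport_feasible_def by blast
  then have "\<lceil>line_sum v l\<rceil> \<le> int (cap l)"
    by (simp add: ceiling_le)
  moreover have "line_sum v' l \<le> of_int \<lceil>line_sum v l\<rceil>"
    using assms(2)[rule_format, of "Inr l"] by (simp add: entries_and_line_sums_def)
  ultimately show "line_sum v' l \<le> real (cap l)"
    by linarith
qed

lemma transport_improving_step:
  fixes v w :: "'a::finite \<times> 'b::finite \<Rightarrow> real"
  assumes feasible: "transport_feasible cap v" and "v e0 \<notin> \<int>"
  obtains v' where "transport_feasible cap v'" "(\<Sum>e\<in>UNIV. v e * w e) \<le> (\<Sum>e\<in>UNIV. v' e * w e)"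
    "card {i. entries_and_line_sums v' i \<notin> \<int>} < card {i. entries_and_line_sums v i \<notin> \<int>}"
proof -
  obtain d0 where d0: "\<forall>e. v e \<in> \<int> \<longrightarrow> d0 e = 0" "\<exists>e. d0 e \<noteq> 0"
    "\<forall>l. line_sum v l \<in> \<int> \<longrightarrow> line_sum d0 l = 0"
    using exists_direction_fixing_integral_line_sums[of v e0] \<open>v e0 \<notin> \<int>\<close> by blast
  \<comment> \<open>\<open>-d0\<close> is admissible as well, so we may move uphill.\<close>
  define d where "d = (if 0 \<le> (\<Sum>e\<in>UNIV. d0 e * w e) then d0 else (\<lambda>e. - d0 e))"
  have uphill: "0 \<le> (\<Sum>e\<in>UNIV. d e * w e)"
    unfolding d_def by (simp add: sum_negf)
  have fixed: "entries_and_line_sums d i = 0" if "entries_and_line_sums v i \<in> \<int>" for i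
    using that d0(1,3) by (cases i) (auto simp: entries_and_line_sums_def d_def line_sum_uminus)
  obtain e1 where "d e1 \<noteq> 0"
    using d0(2) by (auto simp: d_def)
  then have "entries_and_line_sums d (Inl e1) \<noteq> 0"
    by (simp add: entries_and_line_sums_def)
  with fixed obtain t where "0 < t" and bounds:
    "\<forall>i. of_int \<lfloor>entries_and_line_sums v i\<rfloor> \<le> entries_and_line_sums v i + t * entries_and_line_sums d i
      \<and> entries_and_line_sums v i + t * entries_and_line_sums d i \<le> of_int \<lceil>entries_and_line_sums v i\<rceil>"
    and fewer: "{i. entries_and_line_sums v i + t * entries_and_line_sums d i \<notin> \<int>}
      \<subset> {i. entries_and_line_sums v i \<notin> \<int>}"
    by (rule step_to_fewer_fractional) blast+
  define v' where "v' = (\<lambda>e. v e + t * d e)"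
  have v'_coords: "entries_and_line_sums v' i = entries_and_line_sums v i + t * entries_and_line_sums d i" for i
    unfolding v'_def by (rule entries_and_line_sums_add_scaled)
  have "transport_feasible cap v'"
    using feasible bounds unfolding v'_coords[symmetric] by (rule transport_feasible_between_floor_ceiling)
  moreover have "(\<Sum>e\<in>UNIV. v' e * w e) = (\<Sum>e\<in>UNIV. v e * w e) + t * (\<Sum>e\<in>UNIV. d e * w e)"
    unfolding v'_def by (simp add: algebra_simps sum.distrib sum_distrib_left)
  moreover have "card {i. entries_and_line_sums v' i \<notin> \<int>} < card {i. entries_and_line_sums v i \<notin> \<int>}"
    using fewer unfolding v'_coords by (simp add: psubset_card_mono)
  ultimately show thesis
    using that[of v'] \<open>0 < t\<close> uphill by simp
qed

theorem exists_integral_transport_plan_ge: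
  fixes v w :: "'a::finite \<times> 'b::finite \<Rightarrow> real"
  assumes "transport_feasible cap v"
  obtains u where "transport_feasible cap u" "\<forall>e. u e \<in> \<int>" "(\<Sum>e\<in>UNIV. v e * w e) \<le> (\<Sum>e\<in>UNIV. u e * w e)"
  using assms
proof (induction "card {i. entries_and_line_sums v i \<notin> \<int>}" arbitrary: v rule: less_induct)
  case less
  show ?case
  proof (cases "\<forall>e. v e \<in> \<int>")
    case True
    with less.prems show ?thesis
      by blast
  next
    case False
    then obtain e0 where "v e0 \<notin> \<int>"
      by blast
    with less.prems(2) obtain v' where v': "transport_feasible cap v'"
      "(\<Sum>e\<in>UNIV. v e * w e) \<le> (\<Sum>e\<in>UNIV. v' e * w e)"
      "card {i. entries_and_line_sums v' i \<notin> \<int>} < card {i. entries_and_line_sums v i \<notin> \<int>}"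
      by (rule transport_improving_step)
    show ?thesis
      using less.hyps[OF v'(3) _ v'(1)] less.prems(1) v'(2) by (meson order.trans)
  qed
qed

definition bip_obj :: "('x \<Rightarrow> 'x \<Rightarrow> real) \<Rightarrow> ('x \<Rightarrow> 'x \<Rightarrow> nat) \<Rightarrow> real" where
  "bip_obj \<Psi> \<nu> = (\<Sum>p\<in>UNIV. real (\<nu> (fst p) (snd p)) * \<Psi> (fst p) (snd p))"

lemma finite_bip_match: "finite (bip_match n m)"
proof (rule finite_subset)
  show "bip_match n m \<subseteq> (\<Pi>\<^sub>E x\<in>UNIV. \<Pi>\<^sub>E y\<in>UNIV. {..n x})"
  proof
    fix \<nu> assume "\<nu> \<in> bip_match n m"
    then have "\<nu> x y \<le> n x" for x y
      using member_le_sum[of y UNIV "\<nu> x"] unfolding bip_match_def by (auto intro: order.trans)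
    then show "\<nu> \<in> (\<Pi>\<^sub>E x\<in>UNIV. \<Pi>\<^sub>E y\<in>UNIV. {..n x})"
      by (auto simp: PiE_iff)
  qed
qed (simp add: finite_PiE)

lemma W_B_attained: "\<exists>\<nu>\<in>bip_match n m. bip_obj \<Psi> \<nu> = W_B n m \<Psi>"
proof -
  have "(\<lambda>x y. 0) \<in> bip_match n m"
    by (simp add: bip_match_def)
  then have "W_B n m \<Psi> \<in> bip_obj \<Psi> ` bip_match n m"
    unfolding W_B_def bip_obj_def using finite_bip_match by (intro Max_in) auto
  then show ?thesis
    by auto
qed

lemma bip_obj_le_W_B: "\<nu> \<in> bip_match n m \<Longrightarrow> bip_obj \<Psi> \<nu> \<le> W_B n m \<Psi>"
  unfolding W_B_def bip_obj_def using finite_bip_match by (intro Max_ge) auto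

lemma fractional_bip_obj_le_W_B:
  fixes v :: "'x::finite \<times> 'x \<Rightarrow> real"
  assumes "\<And>e. 0 \<le> v e" "\<And>x. (\<Sum>y\<in>UNIV. v (x, y)) \<le> real (n x)" "\<And>y. (\<Sum>x\<in>UNIV. v (x, y)) \<le> real (m y)"
  shows "(\<Sum>e\<in>UNIV. v e * \<Psi> (fst e) (snd e)) \<le> W_B n m \<Psi>"
proof -
  have "transport_feasible (case_sum n m) v"
    unfolding transport_feasible_def
  proof (intro conjI allI)
    fix l :: "'x + 'x"
    show "line_sum v l \<le> real (case_sum n m l)"
      using assms(2,3) by (cases l) (simp_all add: line_sum_Inl line_sum_Inr)
  qed (rule assms(1))
  then obtain u where u: "transport_feasible (case_sum n m) u" "\<forall>e. u e \<in> \<int>"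
    and ge: "(\<Sum>e\<in>UNIV. v e * \<Psi> (fst e) (snd e)) \<le> (\<Sum>e\<in>UNIV. u e * \<Psi> (fst e) (snd e))"
    by (rule exists_integral_transport_plan_ge[where w = "\<lambda>e. \<Psi> (fst e) (snd e)"])
  define \<nu> where "\<nu> x y = nat \<lfloor>u (x, y)\<rfloor>" for x y
  have u_nonneg: "0 \<le> u e" and u_cap: "line_sum u l \<le> real (case_sum n m l)" for e l
    using u(1) unfolding transport_feasible_def by blast+
  have u_eq: "real (\<nu> x y) = u (x, y)" for x y
    using u(2) u_nonneg[of "(x, y)"] unfolding \<nu>_def
    by (metis Ints_cases floor_of_int of_int_of_nat_eq of_nat_nat zero_le_floor)
  have "\<nu> \<in> bip_match n m"
    unfolding bip_match_def
  proof (intro CollectI conjI allI)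
    fix x
    show "(\<Sum>y\<in>UNIV. \<nu> x y) \<le> n x"
      using u_cap[of "Inl x"] by (simp add: line_sum_Inl flip: u_eq of_nat_sum)
  next
    fix y
    show "(\<Sum>x\<in>UNIV. \<nu> x y) \<le> m y"
      using u_cap[of "Inr y"] by (simp add: line_sum_Inr flip: u_eq of_nat_sum)
  qed
  moreover have "(\<Sum>e\<in>UNIV. u e * \<Psi> (fst e) (snd e)) = bip_obj \<Psi> \<nu>"
    unfolding bip_obj_def by (simp add: u_eq)
  ultimately show ?thesis
    using ge bip_obj_le_W_B[of \<nu> n m \<Psi>] by linarith
qed

lemma sum_UNIV_prod_split_diagonal:
  fixes f :: "'x::finite \<times> 'x \<Rightarrow> 'c::comm_monoid_add"
  shows "(\<Sum>p\<in>UNIV. f p) = (\<Sum>x\<in>UNIV. f (x, x)) + (\<Sum>p\<in>{(x, y). x \<noteq> y}. f p)"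
proof -
  have "(\<Sum>p\<in>UNIV. f p) = (\<Sum>p\<in>range (\<lambda>x. (x, x)). f p) + (\<Sum>p\<in>{(x, y). x \<noteq> y}. f p)"
    by (subst sum.union_disjoint[symmetric]) (auto intro: sum.cong)
  then show ?thesis
    by (simp add: sum.reindex inj_on_def)
qed

definition halve_diagonal :: "('x \<times> 'x \<Rightarrow> real) \<Rightarrow> 'x \<Rightarrow> 'x \<Rightarrow> real" where
  "halve_diagonal v x y = (if x = y then v (x, y) / 2 else v (x, y))"

lemma frac_obj_halve_diagonal:
  "frac_obj \<Phi> (halve_diagonal v) = (\<Sum>e\<in>UNIV. v e * (\<Phi> (fst e) (snd e) / 2))"
proof -
  have "(\<Sum>p\<in>{(x, y). x \<noteq> y}. halve_diagonal v (fst p) (snd p) * \<Phi> (fst p) (snd p) / 2)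
      = (\<Sum>p\<in>{(x, y). x \<noteq> y}. v p * (\<Phi> (fst p) (snd p) / 2))"
    by (intro sum.cong) (auto simp: halve_diagonal_def)
  then show ?thesis
    unfolding frac_obj_def by (subst sum_UNIV_prod_split_diagonal) (simp add: halve_diagonal_def)
qed

lemma halve_diagonal_row_sum:
  fixes v :: "'x::finite \<times> 'x \<Rightarrow> real"
  shows "2 * halve_diagonal v x x + (\<Sum>y\<in>UNIV - {x}. halve_diagonal v x y) = (\<Sum>y\<in>UNIV. v (x, y))"
proof -
  have "(\<Sum>y\<in>UNIV - {x}. halve_diagonal v x y) = (\<Sum>y\<in>UNIV - {x}. v (x, y))"
    by (intro sum.cong) (auto simp: halve_diagonal_def)
  then show ?thesis
    by (simp add: halve_diagonal_def sum.remove)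
qed

lemma frac_obj_le_W_B:
  assumes "\<mu> \<in> frac_match n"
  shows "frac_obj \<Phi> \<mu> \<le> W_B n n (\<lambda>x y. \<Phi> x y / 2)"
proof -
  have nonneg: "0 \<le> \<mu> x y" and sym: "\<mu> x y = \<mu> y x"
    and cap: "2 * \<mu> x x + (\<Sum>y\<in>UNIV - {x}. \<mu> x y) \<le> real (n x)" for x y
    using assms unfolding frac_match_def by auto
  define v where "v = (\<lambda>(x, y). if x = y then 2 * \<mu> x y else \<mu> x y)"
  have \<mu>_eq: "halve_diagonal v = \<mu>"
    by (auto simp: fun_eq_iff halve_diagonal_def v_def)
  have rows: "(\<Sum>y\<in>UNIV. v (x, y)) \<le> real (n x)" for x
    using halve_diagonal_row_sum[of v x] cap[of x] by (simp add: \<mu>_eq)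
  have "(\<Sum>x\<in>UNIV. v (x, y)) = (\<Sum>x\<in>UNIV. v (y, x))" for y
    by (intro sum.cong) (auto simp: v_def sym)
  then have cols: "(\<Sum>x\<in>UNIV. v (x, y)) \<le> real (n y)" for y
    using rows by simp
  have "frac_obj \<Phi> \<mu> = (\<Sum>e\<in>UNIV. v e * (\<Phi> (fst e) (snd e) / 2))"
    by (simp flip: \<mu>_eq add: frac_obj_halve_diagonal)
  also have "\<dots> \<le> W_B n n (\<lambda>x y. \<Phi> x y / 2)"
    using nonneg rows cols by (intro fractional_bip_obj_le_W_B) (auto simp: v_def)
  finally show ?thesis .
qed

lemma symmetrized_bip_match_in_frac_match:
  fixes \<Phi> :: "'x::finite \<Rightarrow> 'x \<Rightarrow> real"
  assumes \<Phi>_sym: "\<And>x y. \<Phi> x y = \<Phi> y x" and "\<nu> \<in> bip_match n n"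
  obtains \<mu> where "\<mu> \<in> frac_match n" "half_integral \<mu>" "frac_obj \<Phi> \<mu> = bip_obj (\<lambda>x y. \<Phi> x y / 2) \<nu>"
proof -
  define v where "v = (\<lambda>(x, y). (real (\<nu> x y) + real (\<nu> y x)) / 2)"
  have v_sym: "v (x, y) = v (y, x)" for x y
    by (simp add: v_def)
  have "halve_diagonal v \<in> frac_match n"
    unfolding frac_match_def
  proof (intro CollectI conjI allI)
    fix x y
    show "0 \<le> halve_diagonal v x y"
      by (simp add: halve_diagonal_def v_def)
    show "halve_diagonal v x y = halve_diagonal v y x"
      by (simp add: halve_diagonal_def v_sym)
  next
    fix x
    have "(\<Sum>y\<in>UNIV. v (x, y)) = (real (\<Sum>y\<in>UNIV. \<nu> x y) + real (\<Sum>y\<in>UNIV. \<nu> y x)) / 2"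
      by (simp add: v_def of_nat_sum sum.distrib flip: sum_divide_distrib)
    also have "\<dots> \<le> real (n x)"
    proof -
      have "(\<Sum>y\<in>UNIV. \<nu> x y) \<le> n x" "(\<Sum>y\<in>UNIV. \<nu> y x) \<le> n x"
        using \<open>\<nu> \<in> bip_match n n\<close> unfolding bip_match_def by auto
      then have "real (\<Sum>y\<in>UNIV. \<nu> x y) \<le> real (n x)" "real (\<Sum>y\<in>UNIV. \<nu> y x) \<le> real (n x)"
        by (simp_all only: of_nat_le_iff)
      then show ?thesis
        by (simp add: field_simps)
    qed
    finally show "2 * halve_diagonal v x x + (\<Sum>y\<in>UNIV - {x}. halve_diagonal v x y) \<le> real (n x)"
      by (simp add: halve_diagonal_row_sum)
  qed
  moreover have "half_integral (halve_diagonal v)"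
    unfolding half_integral_def
  proof (intro allI)
    fix x y
    show "\<exists>k::nat. halve_diagonal v x y = real k / 2"
      by (cases "x = y")
        (auto simp: halve_diagonal_def v_def intro: exI[of _ "\<nu> x x"] exI[of _ "\<nu> x y + \<nu> y x"])
  qed
  moreover have "frac_obj \<Phi> (halve_diagonal v) = bip_obj (\<lambda>x y. \<Phi> x y / 2) \<nu>"
  proof -
    have transpose: "(\<Sum>e\<in>UNIV. real (\<nu> (snd e) (fst e)) * \<Phi> (fst e) (snd e))
        = (\<Sum>e\<in>UNIV. real (\<nu> (fst e) (snd e)) * \<Phi> (fst e) (snd e))"
      by (rule sum.reindex_bij_witness[of _ prod.swap prod.swap]) (auto simp: \<Phi>_sym)
    show ?thesis
      unfolding frac_obj_halve_diagonal bip_obj_def v_def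
      using transpose by (simp add: case_prod_beta algebra_simps sum.distrib flip: sum_divide_distrib)
  qed
  ultimately show thesis
    using that by blast
qed

theorem lemma1:
  fixes n :: "'x::finite \<Rightarrow> nat" and \<Phi> :: "'x \<Rightarrow> 'x \<Rightarrow> real"
  assumes "\<forall>x y. \<Phi> x y = \<Phi> y x"
  shows "W_F n \<Phi> = W_B n n (\<lambda>x y. \<Phi> x y / 2)
    \<and> (\<exists>\<mu>\<in>frac_match n. half_integral \<mu> \<and> (\<forall>\<mu>'\<in>frac_match n. frac_obj \<Phi> \<mu>' \<le> frac_obj \<Phi> \<mu>))"
proof -
  obtain \<nu> where \<nu>: "\<nu> \<in> bip_match n n" "bip_obj (\<lambda>x y. \<Phi> x y / 2) \<nu> = W_B n n (\<lambda>x y. \<Phi> x y / 2)"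
    using W_B_attained by blast
  obtain \<mu> where \<mu>: "\<mu> \<in> frac_match n" "half_integral \<mu>" "frac_obj \<Phi> \<mu> = W_B n n (\<lambda>x y. \<Phi> x y / 2)"
    using symmetrized_bip_match_in_frac_match[of \<Phi> \<nu> n] assms \<nu> by auto
  have optimal: "\<forall>\<mu>'\<in>frac_match n. frac_obj \<Phi> \<mu>' \<le> frac_obj \<Phi> \<mu>"
    using frac_obj_le_W_B[of _ n \<Phi>] \<mu>(3) by auto
  have "W_F n \<Phi> = frac_obj \<Phi> \<mu>"
    unfolding W_F_def by (rule cSup_eq_maximum) (use \<mu>(1) optimal in auto)
  with \<mu> optimal show ?thesis
    by auto
qed

end
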